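(* Let $K\ge 1$, $\alpha\in(0,1)$, and let $D=(D_1,\dots,D_K):[0,1]^K\to\{0,1\}^K$ be a testing policy that is monotone and satisfies $$\int_{[0,1]^{|\mathcal I|}}\max_{k\in\mathcal I}D_k(\mathbf p^0_{\mathcal I})\,d\mathbf p_{\mathcal I}\le\alpha\quad\text{for all }\mathcal I\subseteq[K].$$ For each nonempty $\mathcal I\subseteq[K]$ define the local test $\phi_{\mathcal I}(\mathbf p)=\max_{k\in\mathcal I}D_k(\mathbf p^0_{\mathcal I})$, and let $\bar\phi_{\{k\}}(\mathbf p)=\prod_{\mathcal I\subseteq[K],\,\mathcal I\ni k}\phi_{\mathcal I}(\mathbf p)$ be the individual rejection decisions of the closed testing procedure with these local tests. Then $\bar\phi_{\{k\}}(\mathbf p)\ge D_k(\mathbf p)$ for all $k\in[K]$ and all $\mathbf p\in[0,1]^K$.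
   Context: $[K]=\{1,\dots,K\}$. $D$ is monotone if $\mathbf p'\preceq\mathbf p$ (coordinatewise $p'_k\le p_k$) implies $D_k(\mathbf p')\ge D_k(\mathbf p)$ for all $k$. For $\mathcal I=\{j_1,\dots,j_{|\mathcal I|}\}\subseteq[K]$, the projected vector $\mathbf p^0_{\mathcal I}\in[0,1]^K$ has $k$-th coordinate $p_k$ if $k\in\mathcal I$ and $0$ otherwise; $\mathbf p_{\mathcal I}=(p_{j_1},\dots,p_{j_{|\mathcal I|}})$ and the integral is Lebesgue integration over these coordinates. *)

theory Defs
  imports "HOL-Analysis.Analysis" "HOL-Probability.Probability"
begin

text \<open>p-value vectors in [0,1]^K are represented as functions nat => real whose
coordinates 1..K lie in [0,1] and which vanish outside {1..K}.\<close>

definition pbox :: "nat \<Rightarrow> (nat \<Rightarrow> real) set" where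
  "pbox K = {p. (\<forall>k\<in>{1..K}. 0 \<le> p k \<and> p k \<le> 1) \<and> (\<forall>k. k \<notin> {1..K} \<longrightarrow> p k = 0)}"

definition proj0 :: "nat set \<Rightarrow> (nat \<Rightarrow> real) \<Rightarrow> (nat \<Rightarrow> real)" where
  "proj0 I p = (\<lambda>k. if k \<in> I then p k else 0)"

definition monotone_policy :: "nat \<Rightarrow> (nat \<Rightarrow> (nat \<Rightarrow> real) \<Rightarrow> real) \<Rightarrow> bool" where
  "monotone_policy K D \<longleftrightarrow>
     (\<forall>p\<in>pbox K. \<forall>p'\<in>pbox K. (\<forall>k\<in>{1..K}. p' k \<le> p k) \<longrightarrow> (\<forall>k\<in>{1..K}. D k p' \<ge> D k p))"

definition local_test :: "(nat \<Rightarrow> (nat \<Rightarrow> real) \<Rightarrow> real) \<Rightarrow> nat set \<Rightarrow> (nat \<Rightarrow> real) \<Rightarrow> real" where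
  "local_test D I p = Max ((\<lambda>k. D k (proj0 I p)) ` I)"

definition closed_test :: "nat \<Rightarrow> (nat \<Rightarrow> (nat \<Rightarrow> real) \<Rightarrow> real) \<Rightarrow> nat \<Rightarrow> (nat \<Rightarrow> real) \<Rightarrow> real" where
  "closed_test K D k p = (\<Prod>I\<in>{I. I \<subseteq> {1..K} \<and> k \<in> I}. local_test D I p)"

definition unit_leb :: "real measure" where
  "unit_leb = restrict_space lborel {0..1}"

end

theory Submission
  imports Defs
begin

(* Projecting onto I only lowers p-values, so for every I containing k monotonicity gives
   D_k(p) <= D_k(p^0_I) <= phi_I(p).  Since D_k(p) is 0 or 1, a lower bound for every factor
   of the closed-testing product is a lower bound for the product. *)

lemma proj0_in_pbox: "p \<in> pbox K \<Longrightarrow> proj0 I p \<in> pbox K"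
  unfolding pbox_def proj0_def by auto

lemma proj0_le: "p \<in> pbox K \<Longrightarrow> proj0 I p k \<le> p k"
  unfolding pbox_def proj0_def by (cases "k \<in> {1..K}") auto

lemma monotone_policy_le_proj0:
  assumes "monotone_policy K D" and "p \<in> pbox K" and "k \<in> {1..K}"
  shows "D k p \<le> D k (proj0 I p)"
  using assms proj0_in_pbox proj0_le unfolding monotone_policy_def by blast

lemma local_test_ge:
  assumes "finite I" and "k \<in> I"
  shows "D k (proj0 I p) \<le> local_test D I p"
  unfolding local_test_def using assms by (intro Max_ge) auto

lemma prod_ge_binary:
  fixes d :: "'a::linordered_semidom"
  assumes "d \<in> {0, 1}" and "\<And>i. i \<in> A \<Longrightarrow> d \<le> f i"
  shows "d \<le> prod f A"
  using assms by (auto intro: prod_nonneg prod_ge_1)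

theorem proposition2p2:
  fixes K :: nat and \<alpha> :: real and D :: "nat \<Rightarrow> (nat \<Rightarrow> real) \<Rightarrow> real"
  assumes "K \<ge> 1"
    and "0 < \<alpha>" and "\<alpha> < 1"
    and "\<And>k p. k \<in> {1..K} \<Longrightarrow> p \<in> pbox K \<Longrightarrow> D k p \<in> {0, 1}"
    and "monotone_policy K D"
    and "\<And>I. I \<subseteq> {1..K} \<Longrightarrow> I \<noteq> {} \<Longrightarrow>
           (\<integral>q. Max ((\<lambda>k. D k (proj0 I q)) ` I) \<partial>(PiM I (\<lambda>_. unit_leb))) \<le> \<alpha>"
  shows "\<forall>k\<in>{1..K}. \<forall>p\<in>pbox K. closed_test K D k p \<ge> D k p"
proof (intro ballI)
  fix k p assume k: "k \<in> {1..K}" and p: "p \<in> pbox K"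
  have "D k p \<le> local_test D I p" if "I \<subseteq> {1..K}" and "k \<in> I" for I
  proof -
    have "D k p \<le> D k (proj0 I p)"
      using monotone_policy_le_proj0[OF assms(5) p k] .
    also have "\<dots> \<le> local_test D I p"
      using local_test_ge[of I k] finite_subset[OF \<open>I \<subseteq> {1..K}\<close>] \<open>k \<in> I\<close> by simp
    finally show ?thesis .
  qed
  then show "D k p \<le> closed_test K D k p"
    unfolding closed_test_def using assms(4)[OF k p] by (intro prod_ge_binary) auto
qed

end
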